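(* Let $v,w\ge 1$ be integers and $e$ a real number, and let $P(v,w,e)=e^3-(v+w)e^2+2vwe-v^2w^2$. If $P(v,w,e)\le 0$, then $P(v+1,w,e+1)\le 0$. *)

theory Defs
  imports Complex_Main
begin

definition P :: "real \<Rightarrow> real \<Rightarrow> real \<Rightarrow> real" where
  "P v w e = e ^ 3 - (v + w) * e ^ 2 + 2 * v * w * e - v ^ 2 * w ^ 2"

end

theory Submission
  imports Defs
begin

text \<open>Along a line \<open>e = x + u\<close> of slope one, \<open>P x w (x + u)\<close> is a quadratic in \<open>x\<close>
  whose discriminant is \<open>4 u\<^sup>2 w\<^sup>2 (u - (w - 1))\<close>. For \<open>u \<le> w - 1\<close> the quadratic is
  therefore nonpositive everywhere. For \<open>u > w - 1\<close> its value at \<open>x = 1\<close> is positive while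
  its linear coefficient is nonnegative, so once it has dropped to a nonpositive value at some
  \<open>v \<ge> 1\<close> it keeps decreasing from \<open>v\<close> to \<open>v + 1\<close>.\<close>

lemma quadratic_nonpos:
  fixes a b c x :: real
  assumes "a \<le> 0" and "c \<le> 0" and "b\<^sup>2 \<le> 4 * a * c"
  shows "a * x\<^sup>2 + b * x + c \<le> 0"
proof (cases "a = 0")
  case True
  then show ?thesis
    using assms by simp
next
  case False
  have "4 * a * (a * x\<^sup>2 + b * x + c) = (2 * a * x + b)\<^sup>2 + (4 * a * c - b\<^sup>2)"
    by (simp add: power2_eq_square algebra_simps)
  also have "\<dots> \<ge> 0"
    using assms(3) by simp
  finally show ?thesis
    using \<open>a \<le> 0\<close> False by (simp add: zero_le_mult_iff)
qed

lemma quadratic_step_decreases: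
  fixes a b c v :: real
  assumes "0 \<le> b" and "1 \<le> v" and "a * v\<^sup>2 + b * v + c < a + b + c"
  shows "a * (v + 1)\<^sup>2 + b * (v + 1) + c < a * v\<^sup>2 + b * v + c"
proof -
  have "v \<noteq> 1"
    using assms(3) by auto
  have "(v - 1) * (a * (v + 1) + b) = (a * v\<^sup>2 + b * v + c) - (a + b + c)"
    by (simp add: power2_eq_square algebra_simps)
  then have "(v - 1) * (a * (v + 1) + b) < 0"
    using assms(3) by linarith
  then have slope: "a * (v + 1) + b < 0"
    using assms(2) \<open>v \<noteq> 1\<close> by (simp add: mult_less_0_iff)
  then have "a * (v + 1) < 0"
    using assms(1) by linarith
  then have "a < 0"
    using assms(2) by (simp add: mult_less_0_iff)
  then have "a * v < 0"
    using assms(2) by (simp add: mult_neg_pos)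
  moreover have "a * (v + 1)\<^sup>2 + b * (v + 1) + c = (a * v\<^sup>2 + b * v + c) + (a * (v + 1) + b) + a * v"
    by (simp add: power2_eq_square algebra_simps)
  ultimately show ?thesis
    using slope by linarith
qed

lemma P_diagonal:
  "P x w (x + u) = (u + w - w\<^sup>2) * x\<^sup>2 + 2 * u\<^sup>2 * x + (u - w) * u\<^sup>2"
  unfolding P_def by (simp add: power2_eq_square power3_eq_cube algebra_simps)

lemma P_one: "P 1 w e = (e - w) * (e\<^sup>2 - e + w)"
  unfolding P_def by (simp add: power2_eq_square power3_eq_cube algebra_simps)

lemma P_nonpos_if_le:
  assumes "e \<le> x + w - 1"
  shows "P x w e \<le> 0"
proof -
  define u where "u = e - x"
  have "u \<le> w - 1"
    using assms by (simp add: u_def)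
  have "u + w - w\<^sup>2 = (u - (w - 1)) - (w - 1)\<^sup>2"
    by (simp add: power2_eq_square algebra_simps)
  then have "u + w - w\<^sup>2 \<le> 0"
    using \<open>u \<le> w - 1\<close> zero_le_power2[of "w - 1"] by linarith
  moreover have "(u - w) * u\<^sup>2 \<le> 0"
    using \<open>u \<le> w - 1\<close> by (simp add: mult_nonpos_nonneg)
  moreover have "(2 * u\<^sup>2)\<^sup>2 \<le> 4 * (u + w - w\<^sup>2) * ((u - w) * u\<^sup>2)"
  proof -
    have "4 * (u + w - w\<^sup>2) * ((u - w) * u\<^sup>2) - (2 * u\<^sup>2)\<^sup>2 = 4 * u\<^sup>2 * w\<^sup>2 * (w - 1 - u)"
      by (simp add: power2_eq_square algebra_simps)
    moreover have "0 \<le> 4 * u\<^sup>2 * w\<^sup>2 * (w - 1 - u)"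
      using \<open>u \<le> w - 1\<close> by simp
    ultimately show ?thesis
      by linarith
  qed
  ultimately have "P x w (x + u) \<le> 0"
    unfolding P_diagonal by (rule quadratic_nonpos)
  then show ?thesis
    by (simp add: u_def)
qed

lemma P_succ_nonpos:
  fixes v w e :: real
  assumes "1 \<le> v" and "1 \<le> w" and "P v w e \<le> 0"
  shows "P (v + 1) w (e + 1) \<le> 0"
proof (cases "e \<le> v + w - 1")
  case True
  then show ?thesis
    by (intro P_nonpos_if_le) simp
next
  case False
  define u where "u = e - v"
  define a b c where "a = u + w - w\<^sup>2" and "b = 2 * u\<^sup>2" and "c = (u - w) * u\<^sup>2"
  have quadratic: "P x w (x + u) = a * x\<^sup>2 + b * x + c" for x
    unfolding P_diagonal a_def b_def c_def ..
  have "w < 1 + u"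
    using False by (simp add: u_def)
  moreover have "0 < (1 + u)\<^sup>2 - (1 + u) + w"
    using \<open>w < 1 + u\<close> assms(2) by (simp add: power2_eq_square algebra_simps add_pos_pos)
  ultimately have "0 < P 1 w (1 + u)"
    unfolding P_one by simp
  then have "a * v\<^sup>2 + b * v + c < a + b + c"
    using assms(3) quadratic[of 1] quadratic[of v] by (simp add: u_def)
  then have "a * (v + 1)\<^sup>2 + b * (v + 1) + c < a * v\<^sup>2 + b * v + c"
    using assms(1) by (intro quadratic_step_decreases) (simp_all add: b_def)
  then show ?thesis
    using assms(3) quadratic[of v] quadratic[of "v + 1"] by (simp add: u_def add.commute)
qed

theorem lemma4p7:
  fixes v w :: int and e :: real
  assumes "v \<ge> 1" and "w \<ge> 1"
    and "P (of_int v) (of_int w) e \<le> 0"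
  shows "P (of_int v + 1) (of_int w) (e + 1) \<le> 0"
  using P_succ_nonpos assms by simp

end
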